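(* Let $n \geq 5$ and let $\Delta$ be a triangulation of the punctured $n$-gon $\mathcal{P}_n$ with $\Delta \notin \{S_n, S_n^{-1}\}$. Then $\Delta$ contains a diagonal which is close to the border.
   Context: $\mathcal{P}_n$ is a regular $n$-gon with one puncture in its center. For border vertices $a \neq b$, let $\delta_{a,b}$ be the counterclockwise path along the border from $a$ to $b$, and $\delta_{a,a}$ the path going once around the border from $a$ to $a$; $|\delta_{a,b}|$ is the number of border vertices on $\delta_{a,b}$, including $a$ and $b$. An edge is a homotopy class of non-self-crossing paths from $a$ to $b$ in the interior of $\mathcal{P}_n$ homotopic to $\delta_{a,b}$, with $|\delta_{a,b}|\ge 3$. A diagonal (tagged edge) is a pair $(M,\epsilon)$ with $M$ an edge from $a$ to $b$ and $\epsilon\in\{1,-1\}$, where $\epsilon=1$ is forced when $a\neq b$. Edges with $a=b$ are drawn as arcs from the puncture to the border vertex $a$ ("diagonals between the puncture and the border"); those with $\epsilon=-1$ are called tagged. The crossing number of two diagonals is the minimal number of interior intersection points of representatives, except that for two diagonals between the puncture and vertices $a$, $c$ with tags $\epsilon,\epsilon'$ it is $1$ if $a\neq c$ and $\epsilon\neq\epsilon'$, and $0$ otherwise. A triangulation is a maximal set of pairwise non-crossing diagonals (it has $n$ elements). A diagonal from $a$ to $b$ with $a \ne b$ is close to the border if $|\delta_{a,b}|=3$. $S_n$ denotes the triangulation consisting of the $n$ untagged diagonals from the puncture to each of the $n$ border vertices, and $S_n^{-1}$ the one obtained by inverting all tags (the $n$ tagged diagonals from the puncture). *)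

theory Defs
  imports Main
begin

text \<open>Combinatorial model of tagged diagonals of the once-punctured n-gon.
Border vertices are 0,...,n-1 in counterclockwise order.
Arc a b (a \<noteq> b): the edge from a to b homotopic to the counterclockwise
border path delta_{a,b}.  Punc a t: the diagonal between the puncture and the
border vertex a; t = True means tagged (epsilon = -1).\<close>

datatype diag = Arc nat nat | Punc nat bool

text \<open>Number of border segments on delta_{a,b}; |delta_{a,b}| = ccw_len n a b + 1.\<close>
definition ccw_len :: "nat \<Rightarrow> nat \<Rightarrow> nat \<Rightarrow> nat" where
  "ccw_len n a b = (b + n - a) mod n"

text \<open>Border segments on delta_{a,b}; segment i joins vertex i and vertex (i+1) mod n.\<close>
definition segs :: "nat \<Rightarrow> nat \<Rightarrow> nat \<Rightarrow> nat set" where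
  "segs n a b = {(a + i) mod n | i. i < ccw_len n a b}"

definition inner :: "nat \<Rightarrow> nat \<Rightarrow> nat \<Rightarrow> nat set" where
  "inner n a b = {(a + i) mod n | i. 0 < i \<and> i < ccw_len n a b}"

fun is_diag :: "nat \<Rightarrow> diag \<Rightarrow> bool" where
  "is_diag n (Arc a b) = (a < n \<and> b < n \<and> a \<noteq> b \<and> ccw_len n a b + 1 \<ge> 3)"
| "is_diag n (Punc a t) = (a < n)"

text \<open>crosses n d e: the crossing number of d and e is nonzero.\<close>
fun crosses :: "nat \<Rightarrow> diag \<Rightarrow> diag \<Rightarrow> bool" where
  "crosses n (Arc a b) (Arc c d) =
     (\<not> (segs n a b \<subseteq> segs n c d \<or> segs n c d \<subseteq> segs n a b
          \<or> segs n a b \<inter> segs n c d = {}))"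
| "crosses n (Arc a b) (Punc c t) = (c \<in> inner n a b)"
| "crosses n (Punc c t) (Arc a b) = (c \<in> inner n a b)"
| "crosses n (Punc a t) (Punc c s) = (a \<noteq> c \<and> t \<noteq> s)"

definition triangulation :: "nat \<Rightarrow> diag set \<Rightarrow> bool" where
  "triangulation n T \<longleftrightarrow>
     (\<forall>d\<in>T. is_diag n d)
   \<and> (\<forall>d\<in>T. \<forall>e\<in>T. \<not> crosses n d e)
   \<and> (\<forall>d. is_diag n d \<and> d \<notin> T \<longrightarrow> (\<exists>e\<in>T. crosses n d e))"

definition S :: "nat \<Rightarrow> diag set" where
  "S n = {Punc a False | a. a < n}"

definition S_inv :: "nat \<Rightarrow> diag set" where
  "S_inv n = {Punc a True | a. a < n}"

definition close_to_border :: "nat \<Rightarrow> diag \<Rightarrow> bool" where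
  "close_to_border n d \<longleftrightarrow> (\<exists>a b. d = Arc a b \<and> a \<noteq> b \<and> ccw_len n a b + 1 = 3)"

end

theory Submission
  imports Defs
begin

text \<open>Every border vertex v is the only inner vertex of the ear from v - 1 to v + 1.
If \<Delta> contains an arc, one of minimal length is close to the border: otherwise the ear at its
start a is too short to lie in \<Delta>, so it crosses some diagonal of \<Delta>. A puncture diagonal
crossing the ear sits at a + 1 and crosses the minimal arc too; an arc crossing the ear meets
the minimal arc, hence by non-crossing and minimality covers exactly its border segments, which
contain both segments of the ear. If \<Delta> contains no arc, maximality forces a puncture
diagonal at every vertex, and non-crossing forces all of them to carry the same tag.\<close>

definition ear :: "nat \<Rightarrow> nat \<Rightarrow> diag" where
  "ear n a = Arc a ((a + 2) mod n)"

lemma ccw_len_less: "0 < n \<Longrightarrow> ccw_len n a b < n"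
  unfolding ccw_len_def by simp

lemma ccw_len_ear: "a < n \<Longrightarrow> 3 \<le> n \<Longrightarrow> ccw_len n a ((a + 2) mod n) = 2"
  unfolding ccw_len_def by (cases "a + 2 < n") (auto simp: mod_if)

lemma segs_ear:
  assumes "a < n" "3 \<le> n"
  shows "segs n a ((a + 2) mod n) = {a, (a + 1) mod n}"
proof -
  have "\<And>i::nat. i < 2 \<longleftrightarrow> i = 0 \<or> i = 1" by auto
  then have "segs n a ((a + 2) mod n) = {(a + i) mod n | i. i = 0 \<or> i = 1}"
    unfolding segs_def ccw_len_ear[OF assms] by presburger
  also have "\<dots> = {a, (a + 1) mod n}"
    using assms by force
  finally show ?thesis .
qed

lemma inner_ear:
  assumes "a < n" "3 \<le> n"
  shows "inner n a ((a + 2) mod n) = {(a + 1) mod n}"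
proof -
  have "\<And>i::nat. 0 < i \<and> i < 2 \<longleftrightarrow> i = 1" by auto
  then show ?thesis
    unfolding inner_def ccw_len_ear[OF assms] by auto
qed

lemma is_diag_ear: "a < n \<Longrightarrow> 3 \<le> n \<Longrightarrow> is_diag n (ear n a)"
  using ccw_len_ear[of a n] by (auto simp: ear_def ccw_len_def)

lemma crosses_ear_Punc: "a < n \<Longrightarrow> 3 \<le> n \<Longrightarrow> crosses n (ear n a) (Punc c t) \<longleftrightarrow> c = (a + 1) mod n"
  unfolding ear_def crosses.simps by (simp only: inner_ear) auto

lemma crosses_ear_Arc:
  "a < n \<Longrightarrow> 3 \<le> n \<Longrightarrow> crosses n (ear n a) (Arc c d) \<longleftrightarrow>
     \<not> ({a, (a + 1) mod n} \<subseteq> segs n c d \<or> segs n c d \<subseteq> {a, (a + 1) mod n}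
        \<or> {a, (a + 1) mod n} \<inter> segs n c d = {})"
  unfolding ear_def crosses.simps by (simp only: segs_ear)

lemma mod_pred_add_one: "v < n \<Longrightarrow> ((v + n - 1) mod n + 1) mod (n::nat) = v"
  using mod_Suc_eq by auto

lemma first_segs_mem: "a < n \<Longrightarrow> 1 < ccw_len n a b \<Longrightarrow> {a, (a + 1) mod n} \<subseteq> segs n a b"
  unfolding segs_def by (force intro: exI[of _ 0])

lemma inner_first_mem: "1 < ccw_len n a b \<Longrightarrow> (a + 1) mod n \<in> inner n a b"
  unfolding inner_def by blast

lemma card_segs:
  assumes "0 < n"
  shows "card (segs n a b) = ccw_len n a b"
proof -
  have "segs n a b = (\<lambda>i. (a + i) mod n) ` {..<ccw_len n a b}"
    unfolding segs_def by auto
  moreover have "inj_on (\<lambda>i. (a + i) mod n) {..<ccw_len n a b}"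
  proof (rule inj_onI)
    fix i j assume "i \<in> {..<ccw_len n a b}" "j \<in> {..<ccw_len n a b}"
      and eq: "(a + i) mod n = (a + j) mod n"
    then have "i < n" "j < n"
      using ccw_len_less[OF assms, of a b] by auto
    moreover have "i mod n = j mod n"
      using eq by (simp add: nat_mod_eq_iff)
    ultimately show "i = j" by simp
  qed
  ultimately show ?thesis by (simp add: card_image)
qed

lemma segs_eq_if_subset:
  assumes "0 < n" "segs n c d \<subseteq> segs n a b" "ccw_len n a b \<le> ccw_len n c d"
  shows "segs n c d = segs n a b"
proof -
  have "finite (segs n a b)"
    unfolding segs_def by simp
  then show ?thesis
    using assms card_subset_eq card_segs by (metis card_mono le_antisym)
qed

lemma triangulation_crosses_missing_ear:
  assumes "triangulation n \<Delta>" "a < n" "3 \<le> n" "ear n a \<notin> \<Delta>"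
  shows "\<exists>e\<in>\<Delta>. crosses n (ear n a) e"
  using assms is_diag_ear unfolding triangulation_def by blast

lemma minimal_arc_close_to_border:
  assumes tri: "triangulation n \<Delta>" and n: "3 \<le> n" and ab: "Arc a b \<in> \<Delta>"
    and min: "\<And>c d. Arc c d \<in> \<Delta> \<Longrightarrow> ccw_len n a b \<le> ccw_len n c d"
  shows "close_to_border n (Arc a b)"
proof (rule ccontr)
  assume not_close: "\<not> close_to_border n (Arc a b)"
  have "is_diag n (Arc a b)"
    using tri ab unfolding triangulation_def by blast
  then have a: "a < n" and long: "3 \<le> ccw_len n a b"
    using not_close by (auto simp: close_to_border_def)
  have "ear n a \<notin> \<Delta>"
    using min[of a "(a + 2) mod n"] ccw_len_ear[OF a n] long by (auto simp: ear_def)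
  then obtain e where e: "e \<in> \<Delta>" "crosses n (ear n a) e"
    using triangulation_crosses_missing_ear[OF tri a n] by blast
  have no_cross: "\<not> crosses n (Arc a b) e"
    using tri ab e(1) unfolding triangulation_def by blast
  have first: "{a, (a + 1) mod n} \<subseteq> segs n a b"
    using first_segs_mem[OF a] long by simp
  show False
  proof (cases e)
    case (Punc c t)
    then show False
      using e(2) no_cross inner_first_mem[of n a b] long crosses_ear_Punc[OF a n] by simp
  next
    case (Arc c d)
    have "segs n c d = segs n a b" if "segs n c d \<subseteq> segs n a b"
      using segs_eq_if_subset[OF _ that min] n e(1) Arc by simp
    then show False
      using e(2) no_cross first crosses_ear_Arc[OF a n] Arc by auto
  qed
qed

lemma arc_free_triangulation_has_Punc:
  assumes tri: "triangulation n \<Delta>" and n: "3 \<le> n" and arc_free: "\<And>a b. Arc a b \<notin> \<Delta>"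
    and v: "v < n"
  shows "\<exists>t. Punc v t \<in> \<Delta>"
proof -
  define a where "a = (v + n - 1) mod n"
  have a: "a < n" and a_succ: "(a + 1) mod n = v"
    using n v mod_pred_add_one[OF v] by (auto simp: a_def)
  have "ear n a \<notin> \<Delta>"
    using arc_free by (simp add: ear_def)
  then obtain e where e: "e \<in> \<Delta>" "crosses n (ear n a) e"
    using triangulation_crosses_missing_ear[OF tri a n] by blast
  then obtain c t where "e = Punc c t"
    using arc_free by (cases e) auto
  then show ?thesis
    using e crosses_ear_Punc[OF a n] a_succ by auto
qed

lemma arc_free_triangulation:
  assumes tri: "triangulation n \<Delta>" and n: "3 \<le> n" and arc_free: "\<And>a b. Arc a b \<notin> \<Delta>"
  shows "\<Delta> = S n \<or> \<Delta> = S_inv n"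
proof -
  have Punc_in: "\<And>v. v < n \<Longrightarrow> \<exists>t. Punc v t \<in> \<Delta>"
    using arc_free_triangulation_has_Punc[OF tri n arc_free] .
  have same_tag: "t = s" if "Punc v t \<in> \<Delta>" "Punc w s \<in> \<Delta>" "v \<noteq> w" for v w t s
    using tri that unfolding triangulation_def by fastforce
  obtain t0 where t0: "Punc 0 t0 \<in> \<Delta>"
    using Punc_in n by fastforce
  obtain t1 where t1: "Punc 1 t1 \<in> \<Delta>"
    using Punc_in n by fastforce
  have tag: "t = t0" if "Punc v t \<in> \<Delta>" for v t
    using same_tag[OF that t0] same_tag[OF that t1] same_tag[OF t1 t0] by (cases "v = 0") auto
  have "\<Delta> = {Punc v t0 | v. v < n}"
  proof (intro equalityI subsetI)
    fix e assume e: "e \<in> \<Delta>"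
    then obtain v t where "e = Punc v t"
      using arc_free by (cases e) auto
    moreover have "is_diag n e"
      using tri e unfolding triangulation_def by blast
    ultimately show "e \<in> {Punc v t0 | v. v < n}"
      using tag e by auto
  next
    fix e assume "e \<in> {Punc v t0 | v. v < n}"
    then show "e \<in> \<Delta>"
      using Punc_in tag by blast
  qed
  then show ?thesis
    unfolding S_def S_inv_def by (cases t0) auto
qed

theorem lemma5p1:
  fixes n :: nat and \<Delta> :: "diag set"
  assumes "n \<ge> 5" and "triangulation n \<Delta>"
    and "\<Delta> \<noteq> S n" and "\<Delta> \<noteq> S_inv n"
  shows "\<exists>d\<in>\<Delta>. close_to_border n d"
proof -
  have n: "3 \<le> n"
    using assms(1) by simp
  obtain a b where "Arc a b \<in> \<Delta>"
    using arc_free_triangulation[OF assms(2) n] assms(3,4) by blast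
  then obtain p where p: "case_prod Arc p \<in> \<Delta>"
    and min: "\<And>q. case_prod Arc q \<in> \<Delta> \<Longrightarrow> case_prod (ccw_len n) p \<le> case_prod (ccw_len n) q"
    using ex_has_least_nat[of "\<lambda>q. case_prod Arc q \<in> \<Delta>" "(a, b)" "case_prod (ccw_len n)"] by auto
  have "close_to_border n (case_prod Arc p)"
    using minimal_arc_close_to_border[OF assms(2) n, of "fst p" "snd p"] p min[of "(_, _)"]
    by (cases p) auto
  then show ?thesis
    using p by blast
qed

end
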